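(* Let $\omega>0$ and consider two qubits with $H_{\rm Ant}=\omega\sum_{j=1}^3\sigma^j\otimes\sigma^j$. Let $W_p=(1-p)\frac{\mathbb 1}{4}+p\ket{\psi}\bra{\psi}$ with $p\in[0,1]$ and $\ket\psi$ any of the four Bell states $\frac{1}{\sqrt2}(\ket{00}\pm\ket{11})$, $\frac{1}{\sqrt2}(\ket{01}\pm\ket{10})$. Then $\mathcal C_{\rm P}^1(H_{\rm Ant})=2\omega$, $\max_\rho\mathcal C_{\rm P}(\rho,H_{\rm Ant})=\|H_{\rm Ant}\|_\infty=4\omega$, and $\mathcal C_{\rm P}(W_p,H_{\rm Ant})=4p\omega$. Consequently $\mathcal C_{\rm P}(W_p,H_{\rm Ant})>\mathcal C_{\rm P}^1(H_{\rm Ant})$ if and only if $p>1/2$.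
   Context: $\sigma^1,\sigma^2,\sigma^3$ are the Pauli matrices. For a two-qubit density operator $\rho$, the parallel capacity is $\mathcal C_{\rm P}(\rho,H):=\max_{U_a,U_b}\mathrm{tr}[(U_a\otimes U_b)\rho(U_a\otimes U_b)^\dagger H]-\min_{U_a,U_b}\mathrm{tr}[(U_a\otimes U_b)\rho(U_a\otimes U_b)^\dagger H]$ over single-qubit unitaries $U_a,U_b$; $\mathcal C_{\rm P}^1(H):=\max_{\rho\text{ separable}}\mathcal C_{\rm P}(\rho,H)$; $\|H\|_\infty$ is the difference between largest and smallest eigenvalues of $H$. *)

theory Defs
  imports "HOL-Analysis.Analysis" "HOL-Library.Numeral_Type"
begin

text \<open>Single-qubit operators: complex 2x2 matrices indexed by type 2 (basis 0,1).
 Two-qubit operators: complex matrices indexed by 2 \<times> 2, basis vector (a,b) = |ab>.\<close>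

type_synonym qop = "complex^2^2"
type_synonym qqop = "complex^(2\<times>2)^(2\<times>2)"
type_synonym qqvec = "complex^(2\<times>2)"

definition sigma1 :: qop where
  "sigma1 = (\<chi> i j. if i \<noteq> j then 1 else 0)"

definition sigma2 :: qop where
  "sigma2 = (\<chi> i j. if i = 0 \<and> j = 1 then - \<i> else if i = 1 \<and> j = 0 then \<i> else 0)"

definition sigma3 :: qop where
  "sigma3 = (\<chi> i j. if i = j then (if i = 0 then 1 else -1) else 0)"

definition kron :: "complex^'a^'a \<Rightarrow> complex^'b^'b \<Rightarrow> complex^('a\<times>'b)^('a\<times>'b)" where
  "kron A B = (\<chi> x y. A$(fst x)$(fst y) * B$(snd x)$(snd y))"

definition adj :: "complex^'n^'n \<Rightarrow> complex^'n^'n" where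
  "adj A = (\<chi> i j. cnj (A$j$i))"

definition unitary :: "complex^'n^'n \<Rightarrow> bool" where
  "unitary U \<longleftrightarrow> U ** adj U = mat 1 \<and> adj U ** U = mat 1"

definition tr :: "complex^'n^'n \<Rightarrow> complex" where
  "tr A = (\<Sum>i\<in>UNIV. A$i$i)"

definition density_op :: "complex^'n^'n \<Rightarrow> bool" where
  "density_op \<rho> \<longleftrightarrow> adj \<rho> = \<rho>
     \<and> (\<forall>v. 0 \<le> Re (\<Sum>i\<in>UNIV. cnj (v$i) * (\<rho> *v v)$i))
     \<and> tr \<rho> = 1"

definition separable :: "qqop \<Rightarrow> bool" where
  "separable \<rho> \<longleftrightarrow> (\<exists>(n::nat) (q::nat \<Rightarrow> real) (ra::nat \<Rightarrow> qop) (rb::nat \<Rightarrow> qop).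
      (\<forall>k<n. 0 \<le> q k \<and> density_op (ra k) \<and> density_op (rb k))
      \<and> (\<Sum>k<n. q k) = 1
      \<and> \<rho> = (\<Sum>k<n. q k *\<^sub>R kron (ra k) (rb k)))"

text \<open>Energy tr[(Ua \<otimes> Ub) rho (Ua \<otimes> Ub)^dagger H] (real for Hermitian rho, H).\<close>
definition energy :: "qqop \<Rightarrow> qqop \<Rightarrow> qop \<Rightarrow> qop \<Rightarrow> real" where
  "energy \<rho> H Ua Ub = Re (tr (kron Ua Ub ** \<rho> ** adj (kron Ua Ub) ** H))"

definition energies :: "qqop \<Rightarrow> qqop \<Rightarrow> real set" where
  "energies \<rho> H = {energy \<rho> H Ua Ub | Ua Ub. unitary Ua \<and> unitary Ub}"

definition CP :: "qqop \<Rightarrow> qqop \<Rightarrow> real" where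
  "CP \<rho> H = Sup (energies \<rho> H) - Inf (energies \<rho> H)"

definition CP1 :: "qqop \<Rightarrow> real" where
  "CP1 H = Sup {CP \<rho> H | \<rho>. separable \<rho>}"

definition real_eigenvalues :: "complex^'n^'n \<Rightarrow> real set" where
  "real_eigenvalues H = {l. \<exists>v. v \<noteq> 0 \<and> H *v v = l *\<^sub>R v}"

definition spec_spread :: "complex^'n^'n \<Rightarrow> real" where
  "spec_spread H = Max (real_eigenvalues H) - Min (real_eigenvalues H)"

definition H_Ant :: "real \<Rightarrow> qqop" where
  "H_Ant \<omega> = \<omega> *\<^sub>R (kron sigma1 sigma1 + kron sigma2 sigma2 + kron sigma3 sigma3)"

definition ket :: "2 \<Rightarrow> 2 \<Rightarrow> qqvec" where
  "ket a b = (\<chi> x. if x = (a,b) then 1 else 0)"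

definition bell_states :: "qqvec set" where
  "bell_states = {(1 / sqrt 2) *\<^sub>R (ket 0 0 + ket 1 1), (1 / sqrt 2) *\<^sub>R (ket 0 0 - ket 1 1),
                  (1 / sqrt 2) *\<^sub>R (ket 0 1 + ket 1 0), (1 / sqrt 2) *\<^sub>R (ket 0 1 - ket 1 0)}"

definition proj :: "complex^'n \<Rightarrow> complex^'n^'n" where
  "proj v = (\<chi> i j. v$i * cnj (v$j))"

definition werner :: "real \<Rightarrow> qqvec \<Rightarrow> qqop" where
  "werner p \<psi> = ((1 - p) / 4) *\<^sub>R mat 1 + p *\<^sub>R proj \<psi>"

end

theory Submission
  imports Defs
begin

text \<open>With \<open>s\<close> the normalised singlet, \<open>H_Ant \<omega> = \<omega> (1 - 4 |s\<rangle>\<langle>s|)\<close>, so every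
  state has energy in \<open>[-3\<omega>, \<omega>]\<close>. A local unitary on one qubit maps any Bell state to the
  singlet or to a triplet state, so a Bell state attains both ends; the identity part of a
  Werner state carries energy \<open>(1 - p)/4 \<cdot> tr H_Ant = 0\<close>, whence its capacity is \<open>4p\<omega>\<close>.
  On a product state \<open>a \<otimes> b\<close> the energy is \<open>\<omega>\<close> times the inner product of the Bloch
  vectors of \<open>a\<close> and \<open>b\<close>, which lie in the unit ball; by linearity every separable state
  has energies in \<open>[-\<omega>, \<omega>]\<close>, and \<open>|00\<rangle>\<close> attains both bounds. The spectrum of
  \<open>H_Ant \<omega>\<close> is \<open>{\<omega>, -3\<omega>}\<close>, spanned by the triplet and the singlet.\<close>

section \<open>Traces, adjoints, Kronecker products and energies\<close>

lemma tr_mult: "tr (A ** B) = (\<Sum>i\<in>UNIV. \<Sum>j\<in>UNIV. A$i$j * B$j$i)"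
  unfolding tr_def matrix_matrix_mult_def by simp

lemma tr_mult_commute: "tr (A ** B) = tr (B ** (A::complex^'n^'n))"
  unfolding tr_mult by (subst sum.swap) (simp add: mult.commute)

lemma tr_add_mult: "tr ((A + B) ** K) = tr (A ** K) + tr (B ** (K::complex^'n^'n))"
  unfolding tr_mult by (simp add: distrib_right sum.distrib)

lemma tr_scaleR_mult: "tr ((c *\<^sub>R A) ** K) = of_real c * tr (A ** (K::complex^'n^'n))"
  unfolding tr_mult by (simp add: sum_distrib_left, simp add: scaleR_conv_of_real mult.assoc)

lemma tr_sum_mult:
  "tr ((\<Sum>k<(n::nat). q k *\<^sub>R M k) ** K) = (\<Sum>k<n. of_real (q k) * tr (M k ** (K::complex^'n^'n)))"
proof (induction n)
  case 0
  then show ?case unfolding tr_mult by simp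
next
  case (Suc n)
  then show ?case by (simp add: tr_add_mult tr_scaleR_mult)
qed

lemma tr_unitary_conj: "unitary U \<Longrightarrow> tr (U ** A ** adj U) = tr A"
  unfolding unitary_def by (metis matrix_mul_assoc matrix_mul_lid tr_mult_commute)

lemma adj_entry: "adj A $ i $ j = cnj (A $ j $ i)"
  unfolding adj_def by simp

lemma adj_adj [simp]: "adj (adj A) = A"
  unfolding adj_def by (simp add: vec_eq_iff)

lemma adj_mat_1 [simp]: "adj (mat 1) = mat 1"
  unfolding adj_def by (simp add: vec_eq_iff mat_def)

lemma adj_mult: "adj (A ** B) = adj B ** adj (A::complex^'n^'n)"
  unfolding adj_def matrix_matrix_mult_def by (simp add: vec_eq_iff mult.commute)

lemma kron_mult: "kron A B ** kron C D = kron (A ** C) (B ** D)"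
  unfolding kron_def matrix_matrix_mult_def
  by (simp add: vec_eq_iff sum_product UNIV_Times_UNIV[symmetric] sum.cartesian_product
      del: UNIV_Times_UNIV)
     (simp add: algebra_simps case_prod_unfold)

lemma adj_kron: "adj (kron A B) = kron (adj A) (adj B)"
  unfolding adj_def kron_def by (simp add: vec_eq_iff)

lemma kron_mat_1: "kron (mat 1) (mat 1) = mat 1"
  unfolding kron_def by (simp add: vec_eq_iff mat_def prod_eq_iff)

lemma unitary_mat_1: "unitary (mat 1)"
  unfolding unitary_def by simp

lemma unitary_kron: "unitary A \<Longrightarrow> unitary B \<Longrightarrow> unitary (kron A B)"
  unfolding unitary_def by (simp add: adj_kron kron_mult kron_mat_1)

definition qform :: "complex^'n^'n \<Rightarrow> complex^'n \<Rightarrow> complex" where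
  "qform A v = (\<Sum>i\<in>UNIV. cnj (v$i) * (A *v v)$i)"

lemma density_op_iff: "density_op \<rho> \<longleftrightarrow> adj \<rho> = \<rho> \<and> (\<forall>v. 0 \<le> Re (qform \<rho> v)) \<and> tr \<rho> = 1"
  unfolding density_op_def qform_def ..

lemma qform_conj:
  fixes U A :: "complex^'n^'n"
  shows "qform (U ** A ** adj U) v = qform A (adj U *v v)"
proof -
  have inner_adj: "(\<Sum>i\<in>UNIV. cnj (v$i) * (U *v w)$i) = (\<Sum>j\<in>UNIV. cnj ((adj U *v v)$j) * w$j)"
    for w :: "complex^'n"
    unfolding matrix_vector_mult_def adj_def
    by (simp add: sum_distrib_left sum_distrib_right algebra_simps) (subst sum.swap, simp)
  show ?thesis
    unfolding qform_def by (simp add: matrix_vector_mul_assoc[symmetric] inner_adj)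
qed

lemma density_op_unitary_conj: "unitary U \<Longrightarrow> density_op \<rho> \<Longrightarrow> density_op (U ** \<rho> ** adj U)"
  unfolding density_op_iff by (auto simp: tr_unitary_conj adj_mult matrix_mul_assoc qform_conj)

lemma proj_conj: "U ** proj v ** adj U = proj (U *v v)"
  unfolding proj_def adj_def matrix_matrix_mult_def matrix_vector_mult_def
  by (simp add: vec_eq_iff sum_distrib_left sum_distrib_right cnj_sum algebra_simps)

lemma proj_scaleR: "proj (c *\<^sub>R v) = c\<^sup>2 *\<^sub>R proj v"
  unfolding proj_def
  by (simp add: vec_eq_iff scaleR_conv_of_real[where 'a=complex] power2_eq_square algebra_simps)

lemma density_op_proj:
  assumes "(\<Sum>i\<in>UNIV. v$i * cnj (v$i)) = 1"
  shows "density_op (proj v)"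
proof -
  have "adj (proj v) = proj v"
    unfolding adj_def proj_def by (simp add: vec_eq_iff mult.commute)
  moreover have "0 \<le> Re (qform (proj v) u)" for u
  proof -
    define s where "s = (\<Sum>j\<in>UNIV. cnj (v$j) * u$j)"
    have "qform (proj v) u = cnj s * s"
      unfolding s_def qform_def proj_def matrix_vector_mult_def
      by (simp add: sum_distrib_left sum_distrib_right cnj_sum algebra_simps)
    then show ?thesis by (simp add: power2_eq_square)
  qed
  moreover have "tr (proj v) = 1"
    using assms unfolding tr_def proj_def by simp
  ultimately show ?thesis unfolding density_op_iff by blast
qed

lemma energy_eq_tr_conj_H: "energy \<rho> H Ua Ub = Re (tr (\<rho> ** (adj (kron Ua Ub) ** H ** kron Ua Ub)))"
  unfolding energy_def by (metis matrix_mul_assoc tr_mult_commute)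

lemma energy_sum:
  "energy (\<Sum>k<(n::nat). q k *\<^sub>R \<rho> k) H Ua Ub = (\<Sum>k<n. q k * energy (\<rho> k) H Ua Ub)"
  unfolding energy_eq_tr_conj_H tr_sum_mult by (simp add: Re_sum)

lemma energy_scaleR: "energy (c *\<^sub>R \<rho>) H Ua Ub = c * energy \<rho> H Ua Ub"
  unfolding energy_eq_tr_conj_H tr_scaleR_mult by simp

lemma energy_werner:
  assumes "unitary Ua" "unitary Ub"
  shows "energy (werner p \<psi>) H Ua Ub = (1 - p) / 4 * Re (tr H) + p * energy (proj \<psi>) H Ua Ub"
proof -
  have "tr (adj (kron Ua Ub) ** H ** kron Ua Ub) = tr H"
    using tr_unitary_conj[of "adj (kron Ua Ub)"] unitary_kron[OF assms]
    by (simp add: unitary_def)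
  then show ?thesis
    unfolding energy_eq_tr_conj_H werner_def tr_add_mult tr_scaleR_mult by simp
qed

lemma Sup_minus_Inf_eq:
  fixes E :: "real set"
  assumes "\<forall>x\<in>E. lo \<le> x \<and> x \<le> hi" "hi \<in> E" "lo \<in> E"
  shows "Sup E - Inf E = hi - lo"
  using assms by (simp add: cSup_eq_maximum cInf_eq_minimum)

lemma Sup_minus_Inf_le:
  fixes E :: "real set"
  assumes "\<forall>x\<in>E. lo \<le> x \<and> x \<le> hi" "E \<noteq> {}"
  shows "Sup E - Inf E \<le> hi - lo"
proof -
  have "Sup E \<le> hi" using assms by (intro cSup_least) auto
  moreover have "lo \<le> Inf E" using assms by (intro cInf_greatest) auto
  ultimately show ?thesis by simp
qed

lemma CP_le:
  assumes "\<And>Ua Ub. unitary Ua \<Longrightarrow> unitary Ub \<Longrightarrow> lo \<le> energy \<rho> H Ua Ub \<and> energy \<rho> H Ua Ub \<le> hi"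
  shows "CP \<rho> H \<le> hi - lo"
  unfolding CP_def
proof (rule Sup_minus_Inf_le)
  show "energies \<rho> H \<noteq> {}"
    unfolding energies_def using unitary_mat_1 by blast
qed (use assms in \<open>auto simp: energies_def\<close>)

lemma CP_eq:
  assumes "\<And>Ua Ub. unitary Ua \<Longrightarrow> unitary Ub \<Longrightarrow> lo \<le> energy \<rho> H Ua Ub \<and> energy \<rho> H Ua Ub \<le> hi"
    and "unitary Ua" "unitary Ub" "energy \<rho> H Ua Ub = hi"
    and "unitary Va" "unitary Vb" "energy \<rho> H Va Vb = lo"
  shows "CP \<rho> H = hi - lo"
  unfolding CP_def
  by (rule Sup_minus_Inf_eq) (use assms in \<open>auto simp: energies_def\<close>)

section \<open>The Hamiltonian and its energy range\<close>

lemma UNIV_2_eq_0_1: "(UNIV::2 set) = {0, 1}"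
  using UNIV_2 by auto

lemma exhaust_2: "(x::2) = 0 \<or> x = 1"
  using UNIV_2_eq_0_1 by auto

lemma sum_UNIV_2: "(\<Sum>x\<in>(UNIV::2 set). f x) = f 0 + f 1"
  by (simp add: UNIV_2_eq_0_1)

lemma sum_UNIV_2x2: "(\<Sum>x\<in>(UNIV::(2\<times>2) set). f x) = f (0,0) + f (0,1) + f (1,0) + f (1,1)"
  by (simp add: UNIV_Times_UNIV[symmetric] sum.cartesian_product[symmetric] UNIV_2_eq_0_1 algebra_simps
      del: UNIV_Times_UNIV)

lemma all_2: "(\<forall>x::2. P x) \<longleftrightarrow> P 0 \<and> P 1"
  using exhaust_2 by metis

lemma all_2x2: "(\<forall>x::2\<times>2. P x) \<longleftrightarrow> P (0,0) \<and> P (0,1) \<and> P (1,0) \<and> P (1,1)"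
  by (auto simp: all_2)

lemma unitary_sigma1: "unitary sigma1"
  and unitary_sigma2: "unitary sigma2"
  and unitary_sigma3: "unitary sigma3"
  unfolding unitary_def adj_def matrix_matrix_mult_def mat_def sigma1_def sigma2_def sigma3_def
  by (simp_all add: vec_eq_iff all_2 sum_UNIV_2)

lemma H_Ant_entry:
  "H_Ant w $ (a,b) $ (c,d) =
     w * (if a = c \<and> b = d then (if a = b then 1 else -1) else if a = d \<and> b = c then 2 else 0)"
  using exhaust_2[of a] exhaust_2[of b] exhaust_2[of c] exhaust_2[of d]
  unfolding H_Ant_def kron_def sigma1_def sigma2_def sigma3_def
  by (elim disjE) (simp_all only: vector_scaleR_component, simp_all add: scaleR_conv_of_real)

lemma tr_H_Ant: "tr (H_Ant w) = 0"
  unfolding tr_def by (simp add: sum_UNIV_2x2 H_Ant_entry)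

text \<open>\<open>singlet\<close> and \<open>triplet\<close> are left unnormalised (norm \<open>\<surd>2\<close>) so that all
  coefficients stay rational; in these terms \<open>H_Ant \<omega> = \<omega> (1 - 2 |singlet\<rangle>\<langle>singlet|)\<close>.\<close>

definition singlet :: qqvec where "singlet = ket 0 1 - ket 1 0"

definition triplet :: qqvec where "triplet = ket 0 1 + ket 1 0"

lemma tr_mult_H_Ant: "Re (tr (A ** H_Ant w)) = w * (Re (tr A) - 2 * Re (qform A singlet))"
  unfolding tr_mult unfolding tr_def qform_def matrix_vector_mult_def singlet_def ket_def
  by (simp add: sum_UNIV_2x2 sum_UNIV_2 H_Ant_entry algebra_simps)

lemma tr_eq_qform_basis:
  "tr A = qform A (ket 0 0) + qform A (ket 1 1) + (qform A triplet + qform A singlet) / 2"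
  unfolding tr_def qform_def matrix_vector_mult_def singlet_def triplet_def ket_def
  by (simp add: sum_UNIV_2x2 sum_UNIV_2 algebra_simps)

lemma tr_mult_H_Ant_bounds:
  assumes "density_op \<rho>" "0 \<le> w"
  shows "-3 * w \<le> Re (tr (\<rho> ** H_Ant w)) \<and> Re (tr (\<rho> ** H_Ant w)) \<le> w"
proof -
  have psd: "\<And>v. 0 \<le> Re (qform \<rho> v)" and tr: "tr \<rho> = 1"
    using assms(1) unfolding density_op_iff by auto
  have "2 * Re (tr \<rho>) = 2 * Re (qform \<rho> (ket 0 0)) + 2 * Re (qform \<rho> (ket 1 1))
      + Re (qform \<rho> triplet) + Re (qform \<rho> singlet)"
    by (subst tr_eq_qform_basis) (simp add: field_simps)
  then have "0 \<le> Re (qform \<rho> singlet) \<and> Re (qform \<rho> singlet) \<le> 2"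
    using psd[of "ket 0 0"] psd[of "ket 1 1"] psd[of triplet] psd[of singlet] tr by simp
  then have "w * (-3) \<le> w * (1 - 2 * Re (qform \<rho> singlet))"
    and "w * (1 - 2 * Re (qform \<rho> singlet)) \<le> w * 1"
    using assms(2) by (intro mult_left_mono; simp)+
  then show ?thesis
    using tr unfolding tr_mult_H_Ant by simp
qed

lemma energy_H_Ant_bounds:
  assumes "unitary Ua" "unitary Ub" "density_op \<rho>" "0 \<le> w"
  shows "-3 * w \<le> energy \<rho> (H_Ant w) Ua Ub \<and> energy \<rho> (H_Ant w) Ua Ub \<le> w"
  unfolding energy_def
  using tr_mult_H_Ant_bounds[OF density_op_unitary_conj[OF unitary_kron[OF assms(1,2)] assms(3)] assms(4)] .

section \<open>Product and separable states\<close>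

lemma density_op_qubit_entries:
  fixes a :: qop
  assumes "density_op a"
  shows "Im (a$0$0) = 0 \<and> Im (a$1$1) = 0 \<and> a$1$0 = cnj (a$0$1) \<and> Re (a$1$1) = 1 - Re (a$0$0)
     \<and> (Re (a$0$1))\<^sup>2 + (Im (a$0$1))\<^sup>2 \<le> Re (a$0$0) * (1 - Re (a$0$0))"
proof -
  have hermitian: "adj a = a" and psd: "\<And>v. 0 \<le> Re (qform a v)" and tr: "tr a = 1"
    using assms unfolding density_op_iff by auto
  have herm: "a$i$j = cnj (a$j$i)" for i j
    using adj_entry[of a i j] by (simp add: hermitian)
  have im0: "Im (a$0$0) = 0"
    using herm[of 0 0] by (metis cnj.simps(2) neg_equal_zero)
  have im1: "Im (a$1$1) = 0"
    using herm[of 1 1] by (metis cnj.simps(2) neg_equal_zero)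
  have "Re (a$0$0 + a$1$1) = 1"
    using tr unfolding tr_def sum_UNIV_2 by simp
  then have s: "Re (a$1$1) = 1 - Re (a$0$0)"
    by simp
  define z where "z = a$0$1"
  define x where "x = Re (a$0$0)"
  define y where "y = Re (a$1$1)"
  have a00: "a$0$0 = of_real x" and a11: "a$1$1 = of_real y"
    using im0 im1 x_def y_def by (simp_all add: complex_eq_iff)
  have a10: "a$1$0 = cnj z"
    using herm[of 1 0] z_def by simp
  \<comment> \<open>\<open>det a \<ge> 0\<close>: test positivity on the two columns of the adjugate of \<open>a\<close>.\<close>
  define v1 :: "complex^2" where "v1 = (\<chi> i. if i = 0 then - z else of_real x)"
  define v2 :: "complex^2" where "v2 = (\<chi> i. if i = 0 then of_real y else - cnj z)"
  have "Re (qform a v1) + Re (qform a v2) = (x + y) * (x * y - ((Re z)\<^sup>2 + (Im z)\<^sup>2))"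
    unfolding qform_def matrix_vector_mult_def sum_UNIV_2 v1_def v2_def
    by (simp add: a00 a11 a10 z_def[symmetric] power2_eq_square algebra_simps)
  then have "(Re z)\<^sup>2 + (Im z)\<^sup>2 \<le> x * y"
    using psd[of v1] psd[of v2] s x_def y_def by simp
  then show ?thesis
    using im0 im1 herm[of 1 0] s x_def y_def z_def by simp
qed

lemma tr_kron_mult_H_Ant_bounds:
  fixes a b :: qop
  assumes da: "density_op a" and db: "density_op b" and w: "0 \<le> w"
  shows "- w \<le> Re (tr (kron a b ** H_Ant w)) \<and> Re (tr (kron a b ** H_Ant w)) \<le> w"
proof -
  note A = density_op_qubit_entries[OF da] and B = density_op_qubit_entries[OF db]
  define z where "z = a$0$1"
  define x where "x = Re (a$0$0)"
  define u where "u = b$0$1"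
  define y where "y = Re (b$0$0)"
  have a: "a$0$0 = of_real x" "a$1$1 = of_real (1 - x)" "a$1$0 = cnj z"
    using A x_def z_def by (simp_all add: complex_eq_iff)
  have b: "b$0$0 = of_real y" "b$1$1 = of_real (1 - y)" "b$1$0 = cnj u"
    using B y_def u_def by (simp_all add: complex_eq_iff)
  \<comment> \<open>\<open>(2x - 1, 2 Re z, 2 Im z)\<close> is the Bloch vector of \<open>a\<close>, likewise for \<open>b\<close>.\<close>
  have e: "Re (tr (kron a b ** H_Ant w)) = w * ((2*x-1)*(2*y-1) + 4*(Re z * Re u + Im z * Im u))"
    unfolding tr_mult kron_def sum_UNIV_2x2
    by (simp add: H_Ant_entry a b z_def[symmetric] u_def[symmetric] algebra_simps)
  have "(Re z)\<^sup>2 + (Im z)\<^sup>2 \<le> x * (1 - x)" "(Re u)\<^sup>2 + (Im u)\<^sup>2 \<le> y * (1 - y)"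
    using A B unfolding x_def y_def z_def u_def by blast+
  then have hz: "(2*x-1)\<^sup>2 + 4*((Re z)\<^sup>2 + (Im z)\<^sup>2) \<le> 1"
    and hu: "(2*y-1)\<^sup>2 + 4*((Re u)\<^sup>2 + (Im u)\<^sup>2) \<le> 1"
    by (simp_all add: power2_eq_square algebra_simps)
  have "\<bar>(2*x-1)*(2*y-1) + 4*(Re z * Re u + Im z * Im u)\<bar> \<le> 1"
  proof -
    \<comment> \<open>\<open>|r\<^sub>a \<plusminus> r\<^sub>b|\<^sup>2 \<ge> 0\<close> with \<open>|r\<^sub>a|, |r\<^sub>b| \<le> 1\<close>\<close>
    have "0 \<le> ((2*x-1) - (2*y-1))\<^sup>2 + (2*Re z - 2*Re u)\<^sup>2 + (2*Im z - 2*Im u)\<^sup>2"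
      and "0 \<le> ((2*x-1) + (2*y-1))\<^sup>2 + (2*Re z + 2*Re u)\<^sup>2 + (2*Im z + 2*Im u)\<^sup>2"
      by simp_all
    then show ?thesis
      using hz hu unfolding abs_le_iff by (simp add: power2_eq_square algebra_simps)
  qed
  then have "w * ((2*x-1)*(2*y-1) + 4*(Re z * Re u + Im z * Im u)) \<le> w * 1"
    and "w * (-1) \<le> w * ((2*x-1)*(2*y-1) + 4*(Re z * Re u + Im z * Im u))"
    using w unfolding abs_le_iff by (intro mult_left_mono; linarith)+
  then show ?thesis unfolding e by simp
qed

lemma energy_kron_H_Ant_bounds:
  assumes "unitary Ua" "unitary Ub" "density_op a" "density_op b" "0 \<le> w"
  shows "-w \<le> energy (kron a b) (H_Ant w) Ua Ub \<and> energy (kron a b) (H_Ant w) Ua Ub \<le> w"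
proof -
  have "kron Ua Ub ** kron a b ** adj (kron Ua Ub) = kron (Ua ** a ** adj Ua) (Ub ** b ** adj Ub)"
    by (simp add: adj_kron kron_mult)
  then show ?thesis
    unfolding energy_def
    using tr_kron_mult_H_Ant_bounds[OF density_op_unitary_conj[OF assms(1,3)]
        density_op_unitary_conj[OF assms(2,4)] assms(5)]
    by simp
qed

lemma convex_sum_bounds:
  fixes q E :: "nat \<Rightarrow> real"
  assumes "\<And>k. k < n \<Longrightarrow> 0 \<le> q k \<and> lo \<le> E k \<and> E k \<le> hi" "(\<Sum>k<n. q k) = 1"
  shows "lo \<le> (\<Sum>k<n. q k * E k) \<and> (\<Sum>k<n. q k * E k) \<le> hi"
proof -
  have "(\<Sum>k<n. q k * lo) \<le> (\<Sum>k<n. q k * E k)" "(\<Sum>k<n. q k * E k) \<le> (\<Sum>k<n. q k * hi)"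
    using assms(1) by (auto intro!: sum_mono mult_left_mono)
  moreover have "(\<Sum>k<n. q k * lo) = lo" "(\<Sum>k<n. q k * hi) = hi"
    using assms(2) by (simp_all add: sum_distrib_right[symmetric])
  ultimately show ?thesis by simp
qed

lemma energy_separable_H_Ant_bounds:
  assumes "unitary Ua" "unitary Ub" "separable \<rho>" "0 \<le> w"
  shows "-w \<le> energy \<rho> (H_Ant w) Ua Ub \<and> energy \<rho> (H_Ant w) Ua Ub \<le> w"
proof -
  obtain n :: nat and q ra rb where
    h: "\<forall>k<n. 0 \<le> q k \<and> density_op (ra k) \<and> density_op (rb k)" and
    s: "(\<Sum>k<n. q k) = 1" and
    \<rho>: "\<rho> = (\<Sum>k<n. q k *\<^sub>R kron (ra k) (rb k))"
    using assms(3) unfolding separable_def by blast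
  show ?thesis
    unfolding \<rho> energy_sum
    using h energy_kron_H_Ant_bounds[OF assms(1,2) _ _ assms(4)]
    by (intro convex_sum_bounds[OF _ s]) blast
qed

section \<open>Spectrum\<close>

lemma real_eigenvalues_H_Ant: "real_eigenvalues (H_Ant w) = {w, -3 * w}"
proof
  show "real_eigenvalues (H_Ant w) \<subseteq> {w, -3 * w}"
  proof
    fix l assume "l \<in> real_eigenvalues (H_Ant w)"
    then obtain v where v0: "v \<noteq> 0" and ev: "H_Ant w *v v = l *\<^sub>R v"
      unfolding real_eigenvalues_def by blast
    define a b c d where "a = v$(0,0)" and "b = v$(0,1)" and "c = v$(1,0)" and "d = v$(1,1)"
    have comp: "(H_Ant w *v v)$x = (l *\<^sub>R v)$x" for x
      using ev by simp
    have e1: "of_real w * a = of_real l * a"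
      using comp[of "(0,0)"] unfolding matrix_vector_mult_def
      by (simp add: sum_UNIV_2x2 H_Ant_entry a_def scaleR_conv_of_real[where 'a=complex])
    have e4: "of_real w * d = of_real l * d"
      using comp[of "(1,1)"] unfolding matrix_vector_mult_def
      by (simp add: sum_UNIV_2x2 H_Ant_entry d_def scaleR_conv_of_real[where 'a=complex])
    have e2: "- of_real w * b + 2 * of_real w * c = of_real l * b"
      using comp[of "(0,1)"] unfolding matrix_vector_mult_def
      by (simp add: sum_UNIV_2x2 H_Ant_entry b_def c_def scaleR_conv_of_real[where 'a=complex]
          algebra_simps)
    have e3: "2 * of_real w * b - of_real w * c = of_real l * c"
      using comp[of "(1,0)"] unfolding matrix_vector_mult_def
      by (simp add: sum_UNIV_2x2 H_Ant_entry b_def c_def scaleR_conv_of_real[where 'a=complex]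
          algebra_simps)
    have bc_sum: "of_real (l - w) * (b + c) = 0"
    proof -
      have "of_real (l - w) * (b + c)
          = (of_real l * b - (- of_real w * b + 2 * of_real w * c))
            + (of_real l * c - (2 * of_real w * b - of_real w * c))"
        by (simp add: algebra_simps)
      then show ?thesis by (simp only: e2 e3) simp
    qed
    have bc_diff: "of_real (l + 3 * w) * (b - c) = 0"
    proof -
      have "of_real (l + 3 * w) * (b - c)
          = (of_real l * b - (- of_real w * b + 2 * of_real w * c))
            - (of_real l * c - (2 * of_real w * b - of_real w * c))"
        by (simp add: algebra_simps)
      then show ?thesis by (simp only: e2 e3) simp
    qed
    have nonzero: "a \<noteq> 0 \<or> b \<noteq> 0 \<or> c \<noteq> 0 \<or> d \<noteq> 0"
      using v0 unfolding a_def b_def c_def d_def vec_eq_iff all_2x2 by auto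
    show "l \<in> {w, -3 * w}"
    proof (rule ccontr)
      assume "l \<notin> {w, -3 * w}"
      then have "of_real (l - w) \<noteq> (0::complex)" "of_real (l + 3 * w) \<noteq> (0::complex)"
        by (simp_all only: of_real_eq_0_iff) auto
      moreover have "of_real (l - w) * a = 0" "of_real (l - w) * d = 0"
        by (simp_all add: left_diff_distrib e1 e4)
      ultimately have "a = 0" "d = 0" "b + c = 0" "b - c = 0"
        using bc_sum bc_diff by simp_all
      then show False
        using nonzero by (simp add: complex_eq_iff)
    qed
  qed
next
  have "H_Ant w *v ket 0 0 = w *\<^sub>R ket 0 0" and "H_Ant w *v singlet = (-3 * w) *\<^sub>R singlet"
    unfolding matrix_vector_mult_def singlet_def ket_def
    by (simp_all add: vec_eq_iff all_2x2 sum_UNIV_2x2 H_Ant_entry scaleR_conv_of_real[where 'a=complex])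
  moreover have "ket 0 0 \<noteq> 0" "singlet \<noteq> 0"
    unfolding singlet_def ket_def by (auto simp: vec_eq_iff)
  ultimately show "{w, -3 * w} \<subseteq> real_eigenvalues (H_Ant w)"
    unfolding real_eigenvalues_def by blast
qed

lemma spec_spread_H_Ant: "0 \<le> w \<Longrightarrow> spec_spread (H_Ant w) = 4 * w"
  unfolding spec_spread_def by (simp add: real_eigenvalues_H_Ant)

section \<open>Capacities\<close>

lemma energy_proj_mat_1_left:
  "energy (proj v) H (mat 1) U = Re (tr (proj (kron (mat 1) U *v v) ** H))"
  unfolding energy_def proj_conj by simp

lemma energy_proj_div_sqrt2_mat_1_left:
  "energy (proj ((1 / sqrt 2) *\<^sub>R v)) H (mat 1) U = Re (tr (proj (kron (mat 1) U *v v) ** H)) / 2"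
  by (simp add: proj_scaleR energy_scaleR energy_proj_mat_1_left power_divide)

lemma bell_state_energy_extremes:
  assumes "\<psi> \<in> bell_states"
  shows "\<exists>U V. unitary U \<and> unitary V \<and> energy (proj \<psi>) (H_Ant w) (mat 1) U = w
     \<and> energy (proj \<psi>) (H_Ant w) (mat 1) V = -3 * w"
  using assms unfolding bell_states_def
proof (elim insertE emptyE)
  assume \<psi>: "\<psi> = (1 / sqrt 2) *\<^sub>R (ket 0 0 + ket 1 1)"
  show ?thesis
    using unitary_mat_1 unitary_sigma1 unitary_sigma2 unitary_sigma3
    unfolding \<psi> energy_proj_div_sqrt2_mat_1_left
    by (intro exI[of _ sigma1] exI[of _ sigma2] conjI)
      (simp_all add: tr_mult proj_def matrix_vector_mult_def kron_def mat_def
        sigma1_def sigma2_def sigma3_def ket_def sum_UNIV_2x2 sum_UNIV_2 H_Ant_entry)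
next
  assume \<psi>: "\<psi> = (1 / sqrt 2) *\<^sub>R (ket 0 0 - ket 1 1)"
  show ?thesis
    using unitary_mat_1 unitary_sigma1 unitary_sigma2 unitary_sigma3
    unfolding \<psi> energy_proj_div_sqrt2_mat_1_left
    by (intro exI[of _ sigma2] exI[of _ sigma1] conjI)
      (simp_all add: tr_mult proj_def matrix_vector_mult_def kron_def mat_def
        sigma1_def sigma2_def sigma3_def ket_def sum_UNIV_2x2 sum_UNIV_2 H_Ant_entry)
next
  assume \<psi>: "\<psi> = (1 / sqrt 2) *\<^sub>R (ket 0 1 + ket 1 0)"
  show ?thesis
    using unitary_mat_1 unitary_sigma1 unitary_sigma2 unitary_sigma3
    unfolding \<psi> energy_proj_div_sqrt2_mat_1_left
    by (intro exI[of _ "mat 1"] exI[of _ sigma3] conjI)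
      (simp_all add: tr_mult proj_def matrix_vector_mult_def kron_def mat_def
        sigma1_def sigma2_def sigma3_def ket_def sum_UNIV_2x2 sum_UNIV_2 H_Ant_entry)
next
  assume \<psi>: "\<psi> = (1 / sqrt 2) *\<^sub>R (ket 0 1 - ket 1 0)"
  show ?thesis
    using unitary_mat_1 unitary_sigma1 unitary_sigma2 unitary_sigma3
    unfolding \<psi> energy_proj_div_sqrt2_mat_1_left
    by (intro exI[of _ sigma3] exI[of _ "mat 1"] conjI)
      (simp_all add: tr_mult proj_def matrix_vector_mult_def kron_def mat_def
        sigma1_def sigma2_def sigma3_def ket_def sum_UNIV_2x2 sum_UNIV_2 H_Ant_entry)
qed

lemma density_op_proj_bell:
  assumes "\<psi> \<in> bell_states"
  shows "density_op (proj \<psi>)"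
proof (rule density_op_proj)
  show "(\<Sum>i\<in>UNIV. \<psi>$i * cnj (\<psi>$i)) = 1"
    using assms unfolding bell_states_def ket_def
    by (auto simp: sum_UNIV_2x2 scaleR_conv_of_real[where 'a=complex] power_divide
        simp flip: of_real_mult)
qed

lemma CP_werner_H_Ant:
  assumes "0 \<le> w" "0 \<le> p" "\<psi> \<in> bell_states"
  shows "CP (werner p \<psi>) (H_Ant w) = 4 * p * w"
proof -
  have werner_energy: "energy (werner p \<psi>) (H_Ant w) Ua Ub = p * energy (proj \<psi>) (H_Ant w) Ua Ub"
    if "unitary Ua" "unitary Ub" for Ua Ub
    using energy_werner[OF that] by (simp add: tr_H_Ant)
  obtain U V where UV: "unitary U" "unitary V"
    and "energy (proj \<psi>) (H_Ant w) (mat 1) U = w" "energy (proj \<psi>) (H_Ant w) (mat 1) V = -3 * w"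
    using bell_state_energy_extremes[OF assms(3)] by blast
  then have "CP (werner p \<psi>) (H_Ant w) = p * w - p * (-3 * w)"
  proof (intro CP_eq[where Ua = "mat 1" and Ub = U and Va = "mat 1" and Vb = V])
    fix Ua Ub :: qop
    assume U: "unitary Ua" "unitary Ub"
    define E where "E = energy (proj \<psi>) (H_Ant w) Ua Ub"
    have "-3 * w \<le> E \<and> E \<le> w"
      unfolding E_def using energy_H_Ant_bounds[OF U density_op_proj_bell[OF assms(3)] assms(1)] .
    then have "p * (-3 * w) \<le> p * E \<and> p * E \<le> p * w"
      using assms(2) mult_left_mono[of "-3 * w" E p] mult_left_mono[of E w p] by simp
    then show "p * (-3 * w) \<le> energy (werner p \<psi>) (H_Ant w) Ua Ub
        \<and> energy (werner p \<psi>) (H_Ant w) Ua Ub \<le> p * w"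
      unfolding werner_energy[OF U] E_def .
  qed (simp_all add: werner_energy UV unitary_mat_1)
  then show ?thesis by (simp add: algebra_simps)
qed

lemma CP_H_Ant_le_density_op:
  assumes "0 \<le> w" "density_op \<rho>"
  shows "CP \<rho> (H_Ant w) \<le> 4 * w"
proof -
  have "CP \<rho> (H_Ant w) \<le> w - (-3 * w)"
    using energy_H_Ant_bounds[OF _ _ assms(2,1)] by (rule CP_le)
  then show ?thesis by simp
qed

lemma CP_H_Ant_le_separable:
  assumes "0 \<le> w" "separable \<rho>"
  shows "CP \<rho> (H_Ant w) \<le> 2 * w"
proof -
  have "CP \<rho> (H_Ant w) \<le> w - (- w)"
    using energy_separable_H_Ant_bounds[OF _ _ assms(2,1)] by (rule CP_le)
  then show ?thesis by simp
qed

lemma separable_proj_ket_00: "separable (proj (ket 0 0))"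
proof -
  define e0 :: "complex^2" where "e0 = (\<chi> i. if i = 0 then 1 else 0)"
  have "density_op (proj e0)"
    by (rule density_op_proj) (simp add: e0_def sum_UNIV_2)
  moreover have "proj (ket 0 0) = kron (proj e0) (proj e0)"
    unfolding e0_def proj_def kron_def ket_def by (simp add: vec_eq_iff all_2x2 all_2)
  ultimately show ?thesis
    unfolding separable_def
    by (intro exI[of _ "1::nat"] exI[of _ "\<lambda>_. 1"] exI[of _ "\<lambda>_. proj e0"]) simp
qed

lemma CP_proj_ket_00_H_Ant:
  assumes "0 \<le> w"
  shows "CP (proj (ket 0 0)) (H_Ant w) = 2 * w"
proof -
  have "CP (proj (ket 0 0)) (H_Ant w) = w - (- w)"
  proof (rule CP_eq)
    show "energy (proj (ket 0 0)) (H_Ant w) (mat 1) (mat 1) = w"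
      and "energy (proj (ket 0 0)) (H_Ant w) (mat 1) sigma1 = - w"
      unfolding energy_proj_mat_1_left
      by (simp_all add: tr_mult proj_def matrix_vector_mult_def kron_def mat_def sigma1_def ket_def
          sum_UNIV_2x2 sum_UNIV_2 H_Ant_entry)
  qed (use energy_separable_H_Ant_bounds[OF _ _ separable_proj_ket_00 assms] unitary_mat_1
      unitary_sigma1 in auto)
  then show ?thesis by simp
qed

lemma CP1_H_Ant:
  assumes "0 \<le> w"
  shows "CP1 (H_Ant w) = 2 * w"
  unfolding CP1_def
proof (rule cSup_eq_maximum)
  show "2 * w \<in> {CP \<rho> (H_Ant w) |\<rho>. separable \<rho>}"
    using separable_proj_ket_00 CP_proj_ket_00_H_Ant[OF assms, symmetric] by blast
qed (use CP_H_Ant_le_separable[OF assms] in blast)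

lemma Sup_CP_density_op_H_Ant:
  assumes "0 \<le> w"
  shows "Sup {CP \<rho> (H_Ant w) |\<rho>. density_op \<rho>} = 4 * w"
proof (rule cSup_eq_maximum)
  define \<psi> where "\<psi> = (1 / sqrt 2) *\<^sub>R (ket 0 0 + ket 1 1)"
  have "\<psi> \<in> bell_states"
    unfolding \<psi>_def bell_states_def by simp
  moreover have "werner 1 \<psi> = proj \<psi>"
    unfolding werner_def by simp
  ultimately show "4 * w \<in> {CP \<rho> (H_Ant w) |\<rho>. density_op \<rho>}"
    using density_op_proj_bell CP_werner_H_Ant[OF assms, of 1 \<psi>] by force
qed (use CP_H_Ant_le_density_op[OF assms] in blast)

theorem mainTheorem4:
  fixes \<omega> p :: real and \<psi> :: qqvec
  assumes "\<omega> > 0" and "0 \<le> p" and "p \<le> 1" and "\<psi> \<in> bell_states"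
  shows "CP1 (H_Ant \<omega>) = 2 * \<omega>
    \<and> Sup {CP \<rho> (H_Ant \<omega>) | \<rho>. density_op \<rho>} = spec_spread (H_Ant \<omega>)
    \<and> spec_spread (H_Ant \<omega>) = 4 * \<omega>
    \<and> CP (werner p \<psi>) (H_Ant \<omega>) = 4 * p * \<omega>
    \<and> (CP (werner p \<psi>) (H_Ant \<omega>) > CP1 (H_Ant \<omega>) \<longleftrightarrow> p > 1/2)"
proof -
  have "0 \<le> \<omega>" using assms(1) by simp
  note facts = CP1_H_Ant[OF this] Sup_CP_density_op_H_Ant[OF this] spec_spread_H_Ant[OF this]
    CP_werner_H_Ant[OF this assms(2,4)]
  have "4 * p * \<omega> > 2 * \<omega> \<longleftrightarrow> p > 1/2"
    using mult_less_cancel_right_pos[OF assms(1), of 2 "4 * p"] by linarith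
  with facts show ?thesis by simp
qed

end
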